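(* Let $(e,h,A),(e',h',A'),(e'',h'',A'')\in\mathcal D_{g,n}$. There exist a graph $\Gamma\in G_{g,n}$ and sets $W,W',W''\in\mathcal C(\Gamma)$ with $W=W'\sqcup W''$ (disjoint union) and $(\mathrm{val}(W),g(W),A(W))=(e,h,A)$, $(\mathrm{val}(W'),g(W'),A(W'))=(e',h',A')$, $(\mathrm{val}(W''),g(W''),A(W''))=(e'',h'',A'')$ if and only if $A=A'\sqcup A''$, $2(h+1-(h'+h''))=e'+e''-e$, and there is a nondegenerate triangle with side lengths $e,e',e''$ (i.e. $e<e'+e''$, $e'<e+e''$, $e''<e+e'$).
   Context: Fix integers $g,n\ge0$ with $2g-2+n>0$, $[n]=\{1,\dots,n\}$. A stable graph of type $(g,n)$ is a finite connected multigraph $\Gamma$ (loops allowed) with genus function $g:V(\Gamma)\to\mathbb Z_{\ge0}$ and markings $A(v)\subseteq[n]$ partitioning $[n]$, such that $|E(\Gamma)|-|V(\Gamma)|+1+\sum_v g(v)=g$ and $2g(v)-2+\mathrm{val}(v)+|A(v)|>0$ for all $v$. $G_{g,n}$ is the set (category) of representatives of isomorphism classes of such graphs. For $W\subseteq V(\Gamma)$: $W^{\mathsf c}=V(\Gamma)\setminus W$, $\mathrm{val}(W)$ = number of edges between $W$ and $W^{\mathsf c}$, $g(W)=|E(\Gamma[W])|-|W|+1+\sum_{v\in W}g(v)$ with $\Gamma[W]$ the induced subgraph, $A(W)=\bigcup_{v\in W}A(v)$. $W$ is nontrivial biconnected if $\emptyset\ne W\ne V(\Gamma)$ and $\Gamma[W],\Gamma[W^{\mathsf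 c}]$ are connected; $\mathcal C(\Gamma)$ is the set of these. The vine graph $V(e,h,A)$ has two vertices $v_1,v_2$ joined by $e$ edges, no loops, $g(v_1)=h$, $A(v_1)=A$, $g(v_2)=g+1-e-h$, $A(v_2)=[n]\setminus A$. $\mathcal D_{g,n}$ is the set of triples $(e,h,A)$ with $e\ge1$, $h\ge0$, $g+1-e-h\ge0$, $A\subseteq[n]$, such that $V(e,h,A)$ is stable. *)

theory Defs
  imports Main
begin

text \<open>Vertices are natural numbers (any finite graph is isomorphic to one
on natural-number vertices), edges form a list of endpoint pairs (so multiple edges and
loops are allowed; the edge set is indexed by list positions), gen is the genus function
and mark the marking function.\<close>

record sgraph =
  verts :: "nat set"
  edges :: "(nat \<times> nat) list"
  gen :: "nat \<Rightarrow> nat"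
  mark :: "nat \<Rightarrow> nat set"

definition vert_val :: "sgraph \<Rightarrow> nat \<Rightarrow> nat" where
  "vert_val G v = (\<Sum>x\<leftarrow>edges G. (if fst x = v then 1 else 0) + (if snd x = v then 1 else 0))"

definition adj_in :: "sgraph \<Rightarrow> nat set \<Rightarrow> (nat \<times> nat) set" where
  "adj_in G W = {(a, b). a \<in> W \<and> b \<in> W \<and> ((a, b) \<in> set (edges G) \<or> (b, a) \<in> set (edges G))}"

definition connected_on :: "sgraph \<Rightarrow> nat set \<Rightarrow> bool" where
  "connected_on G W \<longleftrightarrow> W \<noteq> {} \<and> (\<forall>u\<in>W. \<forall>v\<in>W. (u, v) \<in> (adj_in G W)\<^sup>*)"

definition set_val :: "sgraph \<Rightarrow> nat set \<Rightarrow> nat" where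
  "set_val G W = length (filter (\<lambda>x. (fst x \<in> W) \<noteq> (snd x \<in> W)) (edges G))"

definition edges_in :: "sgraph \<Rightarrow> nat set \<Rightarrow> nat" where
  "edges_in G W = length (filter (\<lambda>x. fst x \<in> W \<and> snd x \<in> W) (edges G))"

definition set_genus :: "sgraph \<Rightarrow> nat set \<Rightarrow> int" where
  "set_genus G W = int (edges_in G W) - int (card W) + 1 + (\<Sum>v\<in>W. int (gen G v))"

definition set_marks :: "sgraph \<Rightarrow> nat set \<Rightarrow> nat set" where
  "set_marks G W = (\<Union>v\<in>W. mark G v)"

definition stable_graph :: "nat \<Rightarrow> nat \<Rightarrow> sgraph \<Rightarrow> bool" where
  "stable_graph g n G \<longleftrightarrow>
     finite (verts G) \<and>
     (\<forall>x\<in>set (edges G). fst x \<in> verts G \<and> snd x \<in> verts G) \<and>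
     connected_on G (verts G) \<and>
     (\<forall>v\<in>verts G. mark G v \<subseteq> {1..n}) \<and>
     (\<forall>v\<in>verts G. \<forall>w\<in>verts G. v \<noteq> w \<longrightarrow> mark G v \<inter> mark G w = {}) \<and>
     (\<Union>v\<in>verts G. mark G v) = {1..n} \<and>
     int (length (edges G)) - int (card (verts G)) + 1 + (\<Sum>v\<in>verts G. int (gen G v)) = int g \<and>
     (\<forall>v\<in>verts G. 2 * int (gen G v) - 2 + int (vert_val G v) + int (card (mark G v)) > 0)"

definition biconn :: "sgraph \<Rightarrow> nat set set" where
  "biconn G = {W. W \<subseteq> verts G \<and> W \<noteq> {} \<and> W \<noteq> verts G \<and>
                  connected_on G W \<and> connected_on G (verts G - W)}"

definition vine :: "nat \<Rightarrow> nat \<Rightarrow> nat \<Rightarrow> nat \<Rightarrow> nat set \<Rightarrow> sgraph" where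
  "vine g n e h A = \<lparr> verts = {0, 1}, edges = replicate e (0, 1),
     gen = (\<lambda>v. if v = 0 then h else g + 1 - e - h),
     mark = (\<lambda>v. if v = 0 then A else {1..n} - A) \<rparr>"

definition D_set :: "nat \<Rightarrow> nat \<Rightarrow> (nat \<times> nat \<times> nat set) set" where
  "D_set g n = {(e, h, A). e \<ge> 1 \<and> int g + 1 - int e - int h \<ge> 0 \<and> A \<subseteq> {1..n} \<and>
                  stable_graph g n (vine g n e h A)}"

end

theory Submission
  imports Defs
begin

text \<open>Let \<open>c\<close> be the number of edges between \<open>W'\<close> and \<open>W''\<close>. Counting edges gives
\<open>e + 2c = e' + e''\<close> and \<open>g(W) = g(W') + g(W'') + c - 1\<close>, whence the parity condition, and
\<open>c > 0\<close> because \<open>\<Gamma>[W]\<close> is connected, i.e. \<open>e < e' + e''\<close>. The other two triangle inequalities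
are the same argument for the partitions \<open>V - W' = W'' \<union> (V - W)\<close> and
\<open>V - W'' = W' \<union> (V - W)\<close>, since a vertex set and its complement have the same valence.
Conversely, take vertices \<open>0, 1, 2\<close> of genera \<open>h', h'', g + 1 - e - h\<close> marked by
\<open>A', A'', [n] - A\<close>, with \<open>a = h + 1 - h' - h''\<close> edges \<open>01\<close>, \<open>e' - a\<close> edges \<open>02\<close> and
\<open>e'' - a\<close> edges \<open>12\<close>; its vertices are stable because those of the three vine graphs are, and
\<open>{0, 1} = {0} \<union> {1}\<close> realises the data.\<close>

definition edges_between :: "sgraph \<Rightarrow> nat set \<Rightarrow> nat set \<Rightarrow> nat" where
  "edges_between G X Y =
     length (filter (\<lambda>x. (fst x \<in> X \<and> snd x \<in> Y) \<or> (fst x \<in> Y \<and> snd x \<in> X)) (edges G))"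

lemma length_filter_conv_sum_list:
  "length (filter P xs) = (\<Sum>x\<leftarrow>xs. if P x then 1 else 0)"
  by (induction xs) simp_all

lemma rtrancl_leaves_set:
  assumes "(u, v) \<in> R\<^sup>*" "u \<in> X" "v \<notin> X"
  obtains p q where "(p, q) \<in> R" "p \<in> X" "q \<notin> X"
  using assms by (induction rule: rtrancl_induct) blast+

lemma edges_between_pos:
  assumes "connected_on G (X \<union> Y)" "X \<inter> Y = {}" "X \<noteq> {}" "Y \<noteq> {}"
  shows "edges_between G X Y > 0"
proof -
  obtain u v where "u \<in> X" "v \<in> Y" using assms(3,4) by blast
  moreover have "v \<notin> X" using \<open>v \<in> Y\<close> assms(2) by blast
  moreover have "(u, v) \<in> (adj_in G (X \<union> Y))\<^sup>*"
    using assms(1) \<open>u \<in> X\<close> \<open>v \<in> Y\<close> unfolding connected_on_def by blast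
  ultimately obtain p q where "(p, q) \<in> adj_in G (X \<union> Y)" "p \<in> X" "q \<notin> X"
    by (blast elim: rtrancl_leaves_set)
  then have "q \<in> Y" "(p, q) \<in> set (edges G) \<or> (q, p) \<in> set (edges G)"
    unfolding adj_in_def by auto
  with \<open>p \<in> X\<close> show ?thesis
    unfolding edges_between_def length_greater_0_conv filter_empty_conv by force
qed

lemma set_val_Un:
  assumes "X \<inter> Y = {}"
  shows "set_val G (X \<union> Y) + 2 * edges_between G X Y = set_val G X + set_val G Y"
proof -
  have "(if (fst x \<in> X \<union> Y) \<noteq> (snd x \<in> X \<union> Y) then 1 else 0)
        + 2 * (if (fst x \<in> X \<and> snd x \<in> Y) \<or> (fst x \<in> Y \<and> snd x \<in> X) then 1 else 0)
      = (if (fst x \<in> X) \<noteq> (snd x \<in> X) then 1 else 0)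
        + (if (fst x \<in> Y) \<noteq> (snd x \<in> Y) then 1 else (0::nat))" for x :: "nat \<times> nat"
    using assms by auto
  then show ?thesis
    unfolding set_val_def edges_between_def length_filter_conv_sum_list
      sum_list_const_mult[symmetric] sum_list_addf[symmetric] by (intro arg_cong[where f = sum_list] map_cong) simp_all
qed

lemma edges_in_Un:
  assumes "X \<inter> Y = {}"
  shows "edges_in G (X \<union> Y) = edges_in G X + edges_in G Y + edges_between G X Y"
proof -
  have "(if fst x \<in> X \<union> Y \<and> snd x \<in> X \<union> Y then 1 else 0)
      = (if fst x \<in> X \<and> snd x \<in> X then 1 else 0) + (if fst x \<in> Y \<and> snd x \<in> Y then 1 else 0)
        + (if (fst x \<in> X \<and> snd x \<in> Y) \<or> (fst x \<in> Y \<and> snd x \<in> X) then 1 else (0::nat))"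
    for x :: "nat \<times> nat"
    using assms by auto
  then show ?thesis
    unfolding edges_in_def edges_between_def length_filter_conv_sum_list
      sum_list_addf[symmetric] by (intro arg_cong[where f = sum_list] map_cong) simp_all
qed

lemma set_genus_Un:
  assumes "X \<inter> Y = {}" "finite X" "finite Y"
  shows "set_genus G (X \<union> Y) = set_genus G X + set_genus G Y + int (edges_between G X Y) - 1"
  using assms by (simp add: set_genus_def edges_in_Un card_Un_disjoint sum.union_disjoint)

lemma set_genus_parity:
  assumes "X \<inter> Y = {}" "finite X" "finite Y"
  shows "2 * (set_genus G (X \<union> Y) + 1 - (set_genus G X + set_genus G Y))
       = int (set_val G X) + int (set_val G Y) - int (set_val G (X \<union> Y))"
proof -
  have "int (set_val G (X \<union> Y)) + 2 * int (edges_between G X Y) = int (set_val G X) + int (set_val G Y)"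
    using arg_cong[OF set_val_Un[OF assms(1)], of int] by simp
  then show ?thesis using set_genus_Un[OF assms, of G] by (simp add: algebra_simps)
qed

lemma set_val_Un_less:
  assumes "connected_on G (X \<union> Y)" "X \<inter> Y = {}" "X \<noteq> {}" "Y \<noteq> {}"
  shows "set_val G (X \<union> Y) < set_val G X + set_val G Y"
  using set_val_Un[OF assms(2), of G] edges_between_pos[OF assms] by linarith

lemma set_val_Diff:
  assumes "\<forall>x\<in>set (edges G). fst x \<in> verts G \<and> snd x \<in> verts G"
  shows "set_val G (verts G - X) = set_val G X"
proof -
  have "filter (\<lambda>x. (fst x \<in> verts G - X) \<noteq> (snd x \<in> verts G - X)) (edges G)
      = filter (\<lambda>x. (fst x \<in> X) \<noteq> (snd x \<in> X)) (edges G)"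
    using assms by (intro filter_cong) auto
  then show ?thesis unfolding set_val_def by simp
qed

lemma biconn_partition_triangle:
  assumes ends: "\<forall>x\<in>set (edges G). fst x \<in> verts G \<and> snd x \<in> verts G"
    and W: "W' \<union> W'' \<in> biconn G" and W': "W' \<in> biconn G" and W'': "W'' \<in> biconn G"
    and disj: "W' \<inter> W'' = {}"
  shows "set_val G (W' \<union> W'') < set_val G W' + set_val G W''"
    and "set_val G W' < set_val G (W' \<union> W'') + set_val G W''"
    and "set_val G W'' < set_val G (W' \<union> W'') + set_val G W'"
proof -
  define U where "U = verts G - (W' \<union> W'')"
  have "U \<noteq> {}" "connected_on G (W' \<union> W'')"
    using W unfolding U_def biconn_def by blast+
  have "W' \<noteq> {}" "connected_on G (verts G - W')" "W' \<subseteq> verts G"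
    using W' unfolding biconn_def by blast+
  have "W'' \<noteq> {}" "connected_on G (verts G - W'')" "W'' \<subseteq> verts G"
    using W'' unfolding biconn_def by blast+
  have U_val: "set_val G U = set_val G (W' \<union> W'')"
    unfolding U_def using ends by (rule set_val_Diff)
  have compl: "W' \<union> U = verts G - W''" "W'' \<union> U = verts G - W'"
    using \<open>W' \<subseteq> verts G\<close> \<open>W'' \<subseteq> verts G\<close> disj unfolding U_def by blast+
  have disj_U: "W' \<inter> U = {}" "W'' \<inter> U = {}"
    unfolding U_def by blast+
  show "set_val G (W' \<union> W'') < set_val G W' + set_val G W''"
    using \<open>connected_on G (W' \<union> W'')\<close> disj \<open>W' \<noteq> {}\<close> \<open>W'' \<noteq> {}\<close> by (rule set_val_Un_less)
  have "set_val G (W' \<union> U) < set_val G W' + set_val G U"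
    using \<open>connected_on G (verts G - W'')\<close>[folded compl(1)] disj_U(1) \<open>W' \<noteq> {}\<close> \<open>U \<noteq> {}\<close>
    by (rule set_val_Un_less)
  then show "set_val G W'' < set_val G (W' \<union> W'') + set_val G W'"
    unfolding compl(1) U_val set_val_Diff[OF ends] by simp
  have "set_val G (W'' \<union> U) < set_val G W'' + set_val G U"
    using \<open>connected_on G (verts G - W')\<close>[folded compl(2)] disj_U(2) \<open>W'' \<noteq> {}\<close> \<open>U \<noteq> {}\<close>
    by (rule set_val_Un_less)
  then show "set_val G W' < set_val G (W' \<union> W'') + set_val G W''"
    unfolding compl(2) U_val set_val_Diff[OF ends] by simp
qed

lemma set_marks_disjoint:
  assumes "\<forall>v\<in>verts G. \<forall>w\<in>verts G. v \<noteq> w \<longrightarrow> mark G v \<inter> mark G w = {}"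
    and "X \<subseteq> verts G" "Y \<subseteq> verts G" "X \<inter> Y = {}"
  shows "set_marks G X \<inter> set_marks G Y = {}"
proof -
  have "mark G v \<inter> mark G w = {}" if "v \<in> X" "w \<in> Y" for v w
  proof -
    have "v \<noteq> w" "v \<in> verts G" "w \<in> verts G" using that assms(2-4) by auto
    then show ?thesis using assms(1) by simp
  qed
  then show ?thesis unfolding set_marks_def Int_UN_distrib2 by simp
qed

lemma biconn_partition_conditions:
  assumes G: "stable_graph g n G"
    and W: "W' \<union> W'' \<in> biconn G" and W': "W' \<in> biconn G" and W'': "W'' \<in> biconn G"
    and disj: "W' \<inter> W'' = {}"
  shows "set_marks G (W' \<union> W'') = set_marks G W' \<union> set_marks G W''"
    and "set_marks G W' \<inter> set_marks G W'' = {}"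
    and "2 * (set_genus G (W' \<union> W'') + 1 - (set_genus G W' + set_genus G W''))
       = int (set_val G W') + int (set_val G W'') - int (set_val G (W' \<union> W''))"
    and "set_val G (W' \<union> W'') < set_val G W' + set_val G W''"
    and "set_val G W' < set_val G (W' \<union> W'') + set_val G W''"
    and "set_val G W'' < set_val G (W' \<union> W'') + set_val G W'"
proof -
  have ends: "\<forall>x\<in>set (edges G). fst x \<in> verts G \<and> snd x \<in> verts G"
    and marks: "\<forall>v\<in>verts G. \<forall>w\<in>verts G. v \<noteq> w \<longrightarrow> mark G v \<inter> mark G w = {}"
    and "finite (verts G)"
    using G by (simp_all add: stable_graph_def)
  have sub: "W' \<subseteq> verts G" "W'' \<subseteq> verts G" using W' W'' by (simp_all add: biconn_def)
  then have "finite W'" "finite W''" using \<open>finite (verts G)\<close> finite_subset by blast+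
  show "set_marks G (W' \<union> W'') = set_marks G W' \<union> set_marks G W''"
    unfolding set_marks_def by blast
  show "set_marks G W' \<inter> set_marks G W'' = {}"
    using marks sub disj by (rule set_marks_disjoint)
  show "2 * (set_genus G (W' \<union> W'') + 1 - (set_genus G W' + set_genus G W''))
       = int (set_val G W') + int (set_val G W'') - int (set_val G (W' \<union> W''))"
    using disj \<open>finite W'\<close> \<open>finite W''\<close> by (rule set_genus_parity)
  show "set_val G (W' \<union> W'') < set_val G W' + set_val G W''"
    and "set_val G W' < set_val G (W' \<union> W'') + set_val G W''"
    and "set_val G W'' < set_val G (W' \<union> W'') + set_val G W'"
    using biconn_partition_triangle[OF ends W W' W'' disj] by blast+
qed

lemma connected_on_if_pairwise_adjacent:
  assumes "W \<noteq> {}"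
    and "\<And>u v. u \<in> W \<Longrightarrow> v \<in> W \<Longrightarrow> u \<noteq> v \<Longrightarrow> (u, v) \<in> set (edges G) \<or> (v, u) \<in> set (edges G)"
  shows "connected_on G W"
proof -
  have "(u, v) \<in> (adj_in G W)\<^sup>*" if "u \<in> W" "v \<in> W" for u v
  proof (cases "u = v")
    case False
    then have "(u, v) \<in> adj_in G W" using assms(2) that unfolding adj_in_def by blast
    then show ?thesis by blast
  qed simp
  with assms(1) show ?thesis unfolding connected_on_def by blast
qed

definition triangle_graph :: "nat \<Rightarrow> nat \<Rightarrow> nat \<Rightarrow> (nat \<Rightarrow> nat) \<Rightarrow> (nat \<Rightarrow> nat set) \<Rightarrow> sgraph" where
  "triangle_graph a b c gn mk = \<lparr>verts = {0, 1, 2},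
     edges = replicate a (0, 1) @ replicate b (0, 2) @ replicate c (1, 2), gen = gn, mark = mk\<rparr>"

lemma triangle_graph_simps [simp]:
  "verts (triangle_graph a b c gn mk) = {0, 1, 2}"
  "gen (triangle_graph a b c gn mk) = gn"
  "mark (triangle_graph a b c gn mk) = mk"
  by (simp_all add: triangle_graph_def)

lemma set_edges_triangle_graph:
  "0 < a \<Longrightarrow> 0 < b \<Longrightarrow> 0 < c \<Longrightarrow> set (edges (triangle_graph a b c gn mk)) = {(0, 1), (0, 2), (1, 2)}"
  by (auto simp: triangle_graph_def)

lemma connected_on_triangle_graph:
  assumes "0 < a" "0 < b" "0 < c" "W \<subseteq> {0, 1, 2}" "W \<noteq> {}"
  shows "connected_on (triangle_graph a b c gn mk) W"
  using assms by (intro connected_on_if_pairwise_adjacent) (auto simp: set_edges_triangle_graph)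

lemma vert_val_triangle_graph:
  "vert_val (triangle_graph a b c gn mk) 0 = a + b"
  "vert_val (triangle_graph a b c gn mk) 1 = a + c"
  "vert_val (triangle_graph a b c gn mk) 2 = b + c"
  by (simp_all add: vert_val_def triangle_graph_def sum_list_replicate)

lemma set_val_triangle_graph:
  "set_val (triangle_graph a b c gn mk) {0} = a + b"
  "set_val (triangle_graph a b c gn mk) {1} = a + c"
  "set_val (triangle_graph a b c gn mk) {0, 1} = b + c"
  by (simp_all add: set_val_def triangle_graph_def filter_replicate)

lemma set_genus_triangle_graph:
  "set_genus (triangle_graph a b c gn mk) {0} = int (gn 0)"
  "set_genus (triangle_graph a b c gn mk) {1} = int (gn 1)"
  "set_genus (triangle_graph a b c gn mk) {0, 1} = int (gn 0) + int (gn 1) + int a - 1"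
  by (simp_all add: set_genus_def edges_in_def triangle_graph_def filter_replicate)

lemma biconn_triangle_graph:
  assumes "0 < a" "0 < b" "0 < c"
  shows "{0} \<in> biconn (triangle_graph a b c gn mk)" "{1} \<in> biconn (triangle_graph a b c gn mk)"
    "{0, 1} \<in> biconn (triangle_graph a b c gn mk)"
proof -
  have "W \<in> biconn (triangle_graph a b c gn mk)"
    if "W \<subseteq> {0, 1, 2}" "W \<noteq> {}" "2 \<notin> W" for W
  proof -
    have "W \<noteq> {0, 1, 2}" "{0, 1, 2} - W \<noteq> {}" using that(3) by blast+
    then show ?thesis
      using that assms unfolding biconn_def by (simp add: connected_on_triangle_graph)
  qed
  then show "{0} \<in> biconn (triangle_graph a b c gn mk)" "{1} \<in> biconn (triangle_graph a b c gn mk)"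
    "{0, 1} \<in> biconn (triangle_graph a b c gn mk)"
    by auto
qed

lemma stable_graph_triangle_graph:
  assumes pos: "0 < a" "0 < b" "0 < c"
    and marks: "mk 0 \<union> mk 1 \<union> mk 2 = {1..n}"
      "mk 0 \<inter> mk 1 = {}" "mk 0 \<inter> mk 2 = {}" "mk 1 \<inter> mk 2 = {}"
    and genus: "int (a + b + c) - 2 + int (gn 0) + int (gn 1) + int (gn 2) = int g"
    and stable: "0 < 2 * int (gn 0) - 2 + int (a + b) + int (card (mk 0))"
      "0 < 2 * int (gn 1) - 2 + int (a + c) + int (card (mk 1))"
      "0 < 2 * int (gn 2) - 2 + int (b + c) + int (card (mk 2))"
  shows "stable_graph g n (triangle_graph a b c gn mk)"
  unfolding stable_graph_def
proof (intro conjI)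
  show "connected_on (triangle_graph a b c gn mk) (verts (triangle_graph a b c gn mk))"
    using pos by (simp add: connected_on_triangle_graph)
  show "int (length (edges (triangle_graph a b c gn mk))) - int (card (verts (triangle_graph a b c gn mk)))
      + 1 + (\<Sum>v\<in>verts (triangle_graph a b c gn mk). int (gen (triangle_graph a b c gn mk) v)) = int g"
    using genus by (simp add: triangle_graph_def)
  show "\<forall>v\<in>verts (triangle_graph a b c gn mk). 0 < 2 * int (gen (triangle_graph a b c gn mk) v) - 2
      + int (vert_val (triangle_graph a b c gn mk) v) + int (card (mark (triangle_graph a b c gn mk) v))"
    using stable vert_val_triangle_graph[of a b c gn mk] by (simp add: numeral_2_eq_2)
qed (use pos marks in \<open>auto simp: set_edges_triangle_graph\<close>)

lemma D_set_vertex_stability: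
  assumes "(e, h, A) \<in> D_set g n"
  shows "A \<subseteq> {1..n}" and "e + h \<le> g + 1"
    and "0 < 2 * int h - 2 + int e + int (card A)"
    and "0 < 2 * int (g + 1 - e - h) - 2 + int e + int (card ({1..n} - A))"
proof -
  have vine: "stable_graph g n (vine g n e h A)" and "A \<subseteq> {1..n}" "int g + 1 - int e - int h \<ge> 0"
    using assms unfolding D_set_def by auto
  then show "A \<subseteq> {1..n}" "e + h \<le> g + 1" by simp_all
  have "vert_val (vine g n e h A) 0 = e" "vert_val (vine g n e h A) 1 = e"
    by (simp_all add: vert_val_def vine_def sum_list_replicate)
  then show "0 < 2 * int h - 2 + int e + int (card A)"
    and "0 < 2 * int (g + 1 - e - h) - 2 + int e + int (card ({1..n} - A))"
    using vine unfolding stable_graph_def by (auto simp: vine_def)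
qed

lemma triangle_graph_realises:
  assumes D: "(e, h, A) \<in> D_set g n" "(e', h', A') \<in> D_set g n" "(e'', h'', A'') \<in> D_set g n"
    and marks: "A = A' \<union> A''" "A' \<inter> A'' = {}"
    and parity: "2 * (int h + 1 - (int h' + int h'')) = int e' + int e'' - int e"
    and triangle: "e < e' + e''" "e' < e + e''" "e'' < e + e'"
  shows "\<exists>G W W' W''. stable_graph g n G \<and>
            W \<in> biconn G \<and> W' \<in> biconn G \<and> W'' \<in> biconn G \<and>
            W = W' \<union> W'' \<and> W' \<inter> W'' = {} \<and>
            set_val G W = e \<and> set_genus G W = int h \<and> set_marks G W = A \<and>
            set_val G W' = e' \<and> set_genus G W' = int h' \<and> set_marks G W' = A' \<and>
            set_val G W'' = e'' \<and> set_genus G W'' = int h'' \<and> set_marks G W'' = A''"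
proof -
  define a where "a = nat (int h + 1 - int h' - int h'')"
  define gn where "gn = (\<lambda>v::nat. if v = 0 then h' else if v = 1 then h'' else g + 1 - e - h)"
  define mk where "mk = (\<lambda>v::nat. if v = 0 then A' else if v = 1 then A'' else {1..n} - A)"
  define G where "G = triangle_graph a (e' - a) (e'' - a) gn mk"
  have "int h + 1 - int h' - int h'' \<ge> 0" using parity triangle(1) by presburger
  then have a: "2 * int a = int e' + int e'' - int e" "int h = int h' + int h'' + int a - 1"
    using parity unfolding a_def by presburger+
  then have pos: "0 < a" "0 < e' - a" "0 < e'' - a" and "e' - a + (e'' - a) = e"
    using triangle by linarith+
  have "stable_graph g n G"
    unfolding G_def
  proof (rule stable_graph_triangle_graph)
    show "mk 0 \<union> mk 1 \<union> mk 2 = {1..n}" "mk 0 \<inter> mk 1 = {}" "mk 0 \<inter> mk 2 = {}" "mk 1 \<inter> mk 2 = {}"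
      using D_set_vertex_stability(1)[OF D(1)] marks by (auto simp: mk_def)
    show "int (a + (e' - a) + (e'' - a)) - 2 + int (gn 0) + int (gn 1) + int (gn 2) = int g"
      using D_set_vertex_stability(2)[OF D(1)] a pos by (simp add: gn_def)
    show "0 < 2 * int (gn 0) - 2 + int (a + (e' - a)) + int (card (mk 0))"
      "0 < 2 * int (gn 1) - 2 + int (a + (e'' - a)) + int (card (mk 1))"
      "0 < 2 * int (gn 2) - 2 + int (e' - a + (e'' - a)) + int (card (mk 2))"
      using D_set_vertex_stability(3)[OF D(2)] D_set_vertex_stability(3)[OF D(3)]
        D_set_vertex_stability(4)[OF D(1)] pos \<open>e' - a + (e'' - a) = e\<close>
      by (simp_all add: gn_def mk_def)
  qed fact+
  moreover have "set_marks G {0, 1} = A" "set_marks G {0} = A'" "set_marks G {1} = A''"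
    unfolding G_def set_marks_def using marks by (auto simp: mk_def)
  ultimately show ?thesis
    using biconn_triangle_graph[OF pos] set_val_triangle_graph set_genus_triangle_graph pos a
      \<open>e' - a + (e'' - a) = e\<close>
    by (intro exI[of _ G] exI[of _ "{0, 1}"] exI[of _ "{0}"] exI[of _ "{1}"])
      (auto simp: G_def gn_def)
qed

theorem mainTheorem10:
  fixes g n e h e' h' e'' h'' :: nat and A A' A'' :: "nat set"
  assumes "2 * int g - 2 + int n > 0"
    and "(e, h, A) \<in> D_set g n" and "(e', h', A') \<in> D_set g n" and "(e'', h'', A'') \<in> D_set g n"
  shows "(\<exists>G W W' W''. stable_graph g n G \<and>
            W \<in> biconn G \<and> W' \<in> biconn G \<and> W'' \<in> biconn G \<and>
            W = W' \<union> W'' \<and> W' \<inter> W'' = {} \<and>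
            set_val G W = e \<and> set_genus G W = int h \<and> set_marks G W = A \<and>
            set_val G W' = e' \<and> set_genus G W' = int h' \<and> set_marks G W' = A' \<and>
            set_val G W'' = e'' \<and> set_genus G W'' = int h'' \<and> set_marks G W'' = A'')
     \<longleftrightarrow> (A = A' \<union> A'' \<and> A' \<inter> A'' = {} \<and>
          2 * (int h + 1 - (int h' + int h'')) = int e' + int e'' - int e \<and>
          e < e' + e'' \<and> e' < e + e'' \<and> e'' < e + e')"
    (is "?realised \<longleftrightarrow> ?conditions")
proof
  assume ?realised
  then obtain G W' W'' where partition: "stable_graph g n G" "W' \<union> W'' \<in> biconn G"
      "W' \<in> biconn G" "W'' \<in> biconn G" "W' \<inter> W'' = {}"
    and invariants: "set_val G (W' \<union> W'') = e" "set_genus G (W' \<union> W'') = int h" "set_marks G (W' \<union> W'') = A"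
      "set_val G W' = e'" "set_genus G W' = int h'" "set_marks G W' = A'"
      "set_val G W'' = e''" "set_genus G W'' = int h''" "set_marks G W'' = A''"
    by blast
  from biconn_partition_conditions[OF partition] show ?conditions unfolding invariants by blast
next
  assume ?conditions
  with triangle_graph_realises[OF assms(2-4)] show ?realised by blast
qed

end
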